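(* For every integer $n\ge0$, $b(3n)$ is odd if $n=2k(3k+1)$ for some integer $k$ (in which case $b(3n)\equiv(-1)^k\pmod 2$), and $b(3n)\equiv 0\pmod 2$ otherwise.
   Context: $f_m:=(q^m;q^m)_\infty=\prod_{j\ge1}(1-q^{mj})$. The mock theta function $\mathcal{B}(q)=\sum_{n\ge0}\frac{q^n(-q;q^2)_n}{(q;q^2)_{n+1}}=\sum_{n\ge0}b(n)q^n$, where $(a;q)_n=\prod_{j=0}^{n-1}(1-aq^j)$. *)

theory Defs
  imports "HOL-Computational_Algebra.Formal_Power_Series"
begin

text \<open>1/(1 - q^d) as a formal power series over the integers (geometric series, d \<ge> 1).\<close>
definition geom_inv :: "nat \<Rightarrow> int fps" where
  "geom_inv d = Abs_fps (\<lambda>i. if d dvd i then 1 else 0)"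

text \<open>The n-th summand q^n (-q;q^2)_n / (q;q^2)_{n+1} of the mock theta function B(q).\<close>
definition B_term :: "nat \<Rightarrow> int fps" where
  "B_term n = fps_X ^ n * (\<Prod>j<n. 1 + fps_X ^ (2*j+1)) * (\<Prod>j\<in>{..n}. geom_inv (2*j+1))"

text \<open>b(m): coefficient of q^m in B(q); only summands n \<le> m contribute (factor q^n).\<close>
definition b :: "nat \<Rightarrow> int" where
  "b m = fps_nth (\<Sum>n\<le>m. B_term n) m"

end

theory Submission
  imports Defs "HOL-Library.Disjoint_Sets" "HOL-Library.Z2"
begin

(* Modulo 2 we have 1 + q^(2j+1) = 1 - q^(2j+1), so the factor (-q;q^2)_n cancels against
   1/(q;q^2)_n and the n-th summand of B(q) reduces to q^n / (1 - q^(2n+1)). Hence b(m) is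
   congruent mod 2 to the number of n <= m with 2n+1 dividing m-n, i.e. to the number of
   divisors of 2m+1, which is odd exactly when 2m+1 is a square. Finally, 6n+1 = s^2 forces
   s = 6k+1 for an integer k, and then n = 2k(3k+1). *)

lemma even_card_iff_even_card_fixed_points:
  assumes "finite S" and h: "\<And>x. x \<in> S \<Longrightarrow> h x \<in> S" "\<And>x. x \<in> S \<Longrightarrow> h (h x) = x"
  shows "even (card S) \<longleftrightarrow> even (card {x\<in>S. h x = x})"
proof -
  have "(\<Sum>x\<in>{x\<in>S. h x \<noteq> x}. 1 :: bit) = 0"
  proof (rule sum_involution_eq_0)
    fix x assume "x \<in> {x\<in>S. h x \<noteq> x}"
    then show "h x \<in> {x\<in>S. h x \<noteq> x}" "h (h x) = x" "h x \<noteq> x"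
      using h by force+
  qed (simp flip: one_add_one)
  then have "even (card {x\<in>S. h x \<noteq> x})"
    by (simp flip: even_of_nat_iff[where 'a = bit])
  moreover have "card S = card {x\<in>S. h x = x} + card {x\<in>S. h x \<noteq> x}"
    using assms(1) by (subst card_Un_disjoint[symmetric]) (auto intro: arg_cong[where f = card])
  ultimately show ?thesis by simp
qed

lemma odd_card_divisors_iff_square:
  fixes N :: nat
  assumes "N > 0"
  shows "odd (card {d. d dvd N}) \<longleftrightarrow> (\<exists>s. N = s * s)"
proof -
  have fixed: "{d \<in> {d. d dvd N}. N div d = d} = {d. d * d = N}"
    using assms by auto
  have "card {d. d * d = N} = (if \<exists>s. N = s * s then 1 else 0)"
  proof (cases "\<exists>s. N = s * s")
    case True
    then obtain s where "N = s * s" by blast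
    then have "{d. d * d = N} = {s}"
      by (auto simp flip: power2_eq_square)
    then show ?thesis using True by simp
  next
    case False
    then have "{d. d * d = N} = {}" by auto
    then show ?thesis using False by simp
  qed
  moreover have "even (card {d. d dvd N}) \<longleftrightarrow> even (card {d \<in> {d. d dvd N}. N div d = d})"
    by (rule even_card_iff_even_card_fixed_points) (use assms in \<open>auto simp: div_div_eq_right\<close>)
  ultimately show ?thesis
    unfolding fixed by auto
qed

lemma dvd_prod_diff:
  fixes f g :: "'b \<Rightarrow> 'a :: comm_ring_1"
  assumes "\<And>j. j \<in> A \<Longrightarrow> c dvd f j - g j"
  shows "c dvd prod f A - prod g A"
  using assms
proof (induction A rule: infinite_finite_induct)
  case (insert x A)
  have "prod f (insert x A) - prod g (insert x A) = (f x - g x) * prod f A + g x * (prod f A - prod g A)"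
    using insert.hyps by (simp add: algebra_simps)
  then show ?case
    using insert by simp
qed simp_all

lemma fps_const_dvd_nth:
  "fps_const c dvd f \<Longrightarrow> c dvd fps_nth f n"
  by (auto elim!: dvdE)

lemma geom_inv_inverse:
  assumes "d > 0"
  shows "(1 - fps_X ^ d) * geom_inv d = 1"
proof (rule fps_ext)
  fix i
  have "d dvd i \<longleftrightarrow> d \<le> i \<and> d dvd (i - d)" if "i > 0"
    using that assms by (metis dvd_imp_le dvd_minus_self le_add_diff_inverse2 dvd_add_left_iff dvd_refl)
  then show "fps_nth ((1 - fps_X ^ d) * geom_inv d) i = fps_nth 1 i"
    using assms by (cases "i = 0") (auto simp: algebra_simps fps_X_power_mult_nth geom_inv_def)
qed

lemma fps_nth_X_power_mult_geom_inv:
  "fps_nth (fps_X ^ n * geom_inv d) m = (if n \<le> m \<and> d dvd (m - n) then 1 else 0)"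
  by (simp add: fps_X_power_mult_nth geom_inv_def)

lemma B_term_mod_2:
  "2 dvd B_term n - fps_X ^ n * geom_inv (2 * n + 1)"
proof -
  define P where "P = (\<Prod>j<n. 1 + fps_X ^ (2 * j + 1) :: int fps)"
  define Q where "Q = (\<Prod>j<n. 1 - fps_X ^ (2 * j + 1) :: int fps)"
  define G where "G = (\<Prod>j<n. geom_inv (2 * j + 1))"
  have "2 dvd P - Q"
    unfolding P_def Q_def by (rule dvd_prod_diff) (simp add: algebra_simps)
  have "Q * G = 1"
    unfolding Q_def G_def prod.distrib[symmetric] by (intro prod.neutral ballI geom_inv_inverse) simp
  then have "B_term n - fps_X ^ n * geom_inv (2 * n + 1) = fps_X ^ n * geom_inv (2 * n + 1) * G * (P - Q)"
    by (simp add: B_term_def P_def G_def lessThan_Suc_atMost[symmetric] algebra_simps)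
  with \<open>2 dvd P - Q\<close> show ?thesis
    by simp
qed

lemma b_mod_2:
  "2 dvd b m - int (card {n. n \<le> m \<and> (2 * n + 1) dvd (m - n)})"
proof -
  have "int (card {n. n \<le> m \<and> (2 * n + 1) dvd (m - n)})
      = (\<Sum>n\<le>m. fps_nth (fps_X ^ n * geom_inv (2 * n + 1)) m)"
    by (simp add: fps_nth_X_power_mult_geom_inv sum.If_cases atMost_def Int_def)
  then have "b m - int (card {n. n \<le> m \<and> (2 * n + 1) dvd (m - n)})
      = (\<Sum>n\<le>m. fps_nth (B_term n - fps_X ^ n * geom_inv (2 * n + 1)) m)"
    by (simp add: b_def fps_sum_nth sum_subtractf)
  also have "2 dvd \<dots>"
    using B_term_mod_2 by (intro dvd_sum fps_const_dvd_nth) (simp add: numeral_fps_const)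
  finally show ?thesis .
qed

lemma card_shifted_divisors:
  fixes m :: nat
  shows "card {n. n \<le> m \<and> (2 * n + 1) dvd (m - n)} = card {d. d dvd 2 * m + 1}"
proof (rule bij_betw_same_card)
  have shift: "(2 * n + 1) dvd (m - n) \<longleftrightarrow> (2 * n + 1) dvd (2 * m + 1)" if "n \<le> m" for n
  proof -
    have "2 * m + 1 = 2 * (m - n) + (2 * n + 1)"
      using that by simp
    then have "(2 * n + 1) dvd (2 * m + 1) \<longleftrightarrow> (2 * n + 1) dvd 2 * (m - n)"
      by (metis dvd_add_left_iff dvd_refl)
    also have "\<dots> \<longleftrightarrow> (2 * n + 1) dvd (m - n)"
      using coprime_dvd_mult_right_iff[of "2 * n + 1" 2] by simp
    finally show ?thesis ..
  qed
  show "bij_betw (\<lambda>n. 2 * n + 1) {n. n \<le> m \<and> (2 * n + 1) dvd (m - n)} {d. d dvd 2 * m + 1}"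
  proof (rule bij_betw_imageI)
    show "inj_on (\<lambda>n. 2 * n + 1) {n. n \<le> m \<and> (2 * n + 1) dvd (m - n)}"
      by (simp add: inj_on_def)
    show "(\<lambda>n. 2 * n + 1) ` {n. n \<le> m \<and> (2 * n + 1) dvd (m - n)} = {d. d dvd 2 * m + 1}"
    proof (intro equalityI subsetI)
      fix d
      assume "d \<in> (\<lambda>n. 2 * n + 1) ` {n. n \<le> m \<and> (2 * n + 1) dvd (m - n)}"
      then show "d \<in> {d. d dvd 2 * m + 1}"
        using shift by auto
    next
      fix d
      assume "d \<in> {d. d dvd 2 * m + 1}"
      then have d: "d dvd 2 * m + 1"
        by simp
      then have "odd d"
        using dvd_trans[of 2 d "2 * m + 1"] by auto
      moreover have "d \<le> 2 * m + 1"
        using d by (simp add: dvd_imp_le)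
      ultimately have "d = 2 * (d div 2) + 1" "d div 2 \<le> m"
        by simp_all
      then show "d \<in> (\<lambda>n. 2 * n + 1) ` {n. n \<le> m \<and> (2 * n + 1) dvd (m - n)}"
        using shift[of "d div 2"] d by (intro image_eqI[of _ _ "d div 2"]) auto
    qed
  qed
qed

lemma odd_b_iff_square:
  "odd (b m) \<longleftrightarrow> (\<exists>s. 2 * m + 1 = s * s)"
proof -
  have "odd (b m) \<longleftrightarrow> odd (card {n. n \<le> m \<and> (2 * n + 1) dvd (m - n)})"
    using b_mod_2[of m] by (simp add: even_diff)
  also have "\<dots> \<longleftrightarrow> (\<exists>s. 2 * m + 1 = s * s)"
    unfolding card_shifted_divisors by (rule odd_card_divisors_iff_square) simp
  finally show ?thesis .
qed

lemma six_mult_plus_one_square_iff: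
  "(\<exists>s::nat. 6 * n + 1 = s * s) \<longleftrightarrow> (\<exists>k::int. int n = 2 * k * (3 * k + 1))"
proof
  assume "\<exists>s. 6 * n + 1 = s * s"
  then obtain s where s: "6 * n + 1 = s * s"
    by blast
  then have "s * s mod 6 = 1"
    by (simp flip: s)
  then have "s mod 6 * (s mod 6) mod 6 = 1"
    by (simp add: mod_mult_eq)
  moreover have "s mod 6 = 0 \<or> s mod 6 = 1 \<or> s mod 6 = 2 \<or> s mod 6 = 3 \<or> s mod 6 = 4 \<or> s mod 6 = 5"
    using mod_less_divisor[of 6 s] by linarith
  ultimately have "s mod 6 = 1 \<or> s mod 6 = 5"
    by auto
  moreover define q where "q = s div 6"
  ultimately have "s = 6 * q + 1 \<or> s = 6 * q + 5"
    using mult_div_mod_eq[of 6 s] by linarith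
  then have "int s = 6 * int q + 1 \<or> int s = 6 * (int q + 1) - 1"
    by auto
  moreover have "6 * int n + 1 = int s * int s"
    using arg_cong[OF s, of int] by simp
  ultimately have "int n = 2 * int q * (3 * int q + 1) \<or>
      int n = 2 * - (int q + 1) * (3 * - (int q + 1) + 1)"
    by (auto simp: algebra_simps)
  then show "\<exists>k::int. int n = 2 * k * (3 * k + 1)"
    by blast
next
  assume "\<exists>k::int. int n = 2 * k * (3 * k + 1)"
  then obtain k :: int where k: "int n = 2 * k * (3 * k + 1)"
    by blast
  have "int (6 * n + 1) = int (nat \<bar>6 * k + 1\<bar> * nat \<bar>6 * k + 1\<bar>)"
    using k by (simp add: algebra_simps)
  then show "\<exists>s. 6 * n + 1 = s * s"
    by (simp only: of_nat_eq_iff) blast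
qed

theorem mainTheorem2:
  fixes n :: nat
  shows "((\<exists>k::int. int n = 2*k*(3*k+1)) \<longrightarrow>
            odd (b (3*n)) \<and>
            (\<forall>k::int. int n = 2*k*(3*k+1) \<longrightarrow> b (3*n) mod 2 = ((-1) ^ nat \<bar>k\<bar>) mod 2))
       \<and> ((\<not> (\<exists>k::int. int n = 2*k*(3*k+1))) \<longrightarrow> b (3*n) mod 2 = 0)"
proof -
  have odd_iff: "odd (b (3 * n)) \<longleftrightarrow> (\<exists>k::int. int n = 2 * k * (3 * k + 1))"
    using odd_b_iff_square[of "3 * n"] six_mult_plus_one_square_iff[of n] by simp
  have minus_one_power_mod_2: "(-1 :: int) ^ j mod 2 = 1" for j
    by (simp flip: odd_iff_mod_2_eq_one)
  show ?thesis
    using odd_iff by (auto simp add: minus_one_power_mod_2 simp flip: odd_iff_mod_2_eq_one even_iff_mod_2_eq_zero)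
qed

end
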